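(* Let $p \geq 3$ and $q \geq 2$ be integers and let $L$ be the Laplacian of the graph $K_p \oplus C_q$. Then the spectrum of $L$ consists of the eigenvalue $p$ with multiplicity $p-2$, a simple eigenvalue $\lambda \in (p,p+2]$, and $q$ eigenvalues (counted with multiplicity) in the interval $[0,4]$, which include the simple eigenvalue $0$.
   Context: For integers $p \geq 3$, $q \geq 2$, the graph $K_p \oplus C_q$ has vertex set $\{-p+1,\ldots,0\} \cup \{1,\ldots,q-1\}$ (so $p+q-1$ vertices). Its edges are: every pair of distinct vertices in $\{-p+1,\ldots,0\}$, the edge $\{0,1\}$, and the edges $\{j,j+1\}$ for $1 \leq j \leq q-2$. The Laplacian $L$ is the matrix with $L_{ii}$ equal to the degree of vertex $i$, $L_{ij}=-1$ if $i\neq j$ are adjacent and $0$ otherwise. *)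

theory Defs
  imports "Jordan_Normal_Form.Char_Poly" "HOL-Library.Multiset"
begin

definition KC_vertices :: "nat \<Rightarrow> nat \<Rightarrow> int set" where
  "KC_vertices p q = {- int p + 1 .. int q - 1}"

definition KC_adj :: "nat \<Rightarrow> nat \<Rightarrow> int \<Rightarrow> int \<Rightarrow> bool" where
  "KC_adj p q u v \<longleftrightarrow> u \<in> KC_vertices p q \<and> v \<in> KC_vertices p q \<and> u \<noteq> v \<and>
     ((u \<le> 0 \<and> v \<le> 0) \<or> {u, v} = {0, 1} \<or>
      (\<exists>j. 1 \<le> j \<and> j \<le> int q - 2 \<and> {u, v} = {j, j + 1}))"

definition KC_degree :: "nat \<Rightarrow> nat \<Rightarrow> int \<Rightarrow> nat" where
  "KC_degree p q u = card {v \<in> KC_vertices p q. KC_adj p q u v}"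

definition KC_laplacian :: "nat \<Rightarrow> nat \<Rightarrow> real mat" where
  "KC_laplacian p q = mat (p + q - 1) (p + q - 1) (\<lambda>(i, j).
     let u = int i - int p + 1; v = int j - int p + 1 in
     if i = j then real (KC_degree p q u)
     else if KC_adj p q u v then -1 else 0)"

text \<open>E is the spectrum of A counted with (algebraic) multiplicity:
  the characteristic polynomial splits as the product of (x - a) over a in E.\<close>
definition spectrum_mset :: "real mat \<Rightarrow> real multiset \<Rightarrow> bool" where
  "spectrum_mset A E \<longleftrightarrow> char_poly A = (\<Prod>a\<in>#E. [:- a, 1:])"

end

theory Submission
  imports Defs
begin

(*
The Laplacian of K_p (+) C_q has p + q - 1 explicit, pairwise orthogonal eigenvectors, so its
characteristic polynomial can be read off from their eigenvalues. The p - 2 zero-sum vectors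
supported on the clique vertices other than 0 give the eigenvalue p. Every other eigenvector may
be normalised to be 1 on those vertices; its entries along the path then obey the recurrence
x(m+2) = (2 - r) x(m+1) - x(m), and r is an eigenvalue exactly when the secular function
x(q+1) - x(q) vanishes at r. Substituting r = 2 - 2 cos 2s gives a closed form whose sign
alternates at the angles k pi / (2q), which yields q - 1 roots in (0, 4) besides the root 0,
while (-1)^q times the secular function changes sign between p + 1 and p + 2, which yields one
more root. Eigenvectors of the symmetric Laplacian for distinct eigenvalues are orthogonal.
*)

section \<open>Diagonalisation by an orthogonal eigenbasis\<close>

lemma symmetric_eigenvectors_orthogonal:
  fixes A :: "'a :: idom mat"
  assumes A: "A \<in> carrier_mat n n" and sym: "transpose_mat A = A"
    and x: "x \<in> carrier_vec n" and y: "y \<in> carrier_vec n"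
    and Ax: "A *\<^sub>v x = r \<cdot>\<^sub>v x" and Ay: "A *\<^sub>v y = s \<cdot>\<^sub>v y" and "r \<noteq> s"
  shows "x \<bullet> y = 0"
proof -
  have "(transpose_mat A *\<^sub>v x) \<bullet> y = x \<bullet> (A *\<^sub>v y)"
    by (rule transpose_vec_mult_scalar[OF A y x])
  then have "r * (x \<bullet> y) = s * (x \<bullet> y)"
    using x y unfolding sym Ax Ay by simp
  then show ?thesis using \<open>r \<noteq> s\<close> by simp
qed

lemma scalar_prod_self_pos:
  fixes v :: "'a :: linordered_idom vec"
  assumes "i < dim_vec v" and "v $ i \<noteq> 0"
  shows "v \<bullet> v > 0"
  unfolding scalar_prod_def using assms
  by (intro sum_pos2[of _ i]) (auto simp: zero_less_mult_iff)

lemma orthogonal_columns_invertible: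
  fixes P :: "'a :: field mat"
  assumes P: "P \<in> carrier_mat n n"
    and orth: "\<And>c d. c < n \<Longrightarrow> d < n \<Longrightarrow> c \<noteq> d \<Longrightarrow> col P c \<bullet> col P d = 0"
    and nonzero: "\<And>c. c < n \<Longrightarrow> col P c \<bullet> col P c \<noteq> 0"
  obtains Q where "Q \<in> carrier_mat n n" and "Q * P = 1\<^sub>m n" and "P * Q = 1\<^sub>m n"
proof -
  define g where "g c = col P c \<bullet> col P c" for c
  define Q where "Q = mat_diag n (\<lambda>c. inverse (g c)) * transpose_mat P"
  have Q: "Q \<in> carrier_mat n n"
    unfolding Q_def using P by (intro mult_carrier_mat[of _ n n]) auto
  have gram: "transpose_mat P * P = mat_diag n g"
  proof (rule eq_matI)
    fix c d assume "c < dim_row (mat_diag n g)" "d < dim_col (mat_diag n g)"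
    then have c: "c < n" and d: "d < n" by (auto simp: mat_diag_def)
    show "(transpose_mat P * P) $$ (c, d) = mat_diag n g $$ (c, d)"
      using c d P orth[OF c d] by (simp add: mat_diag_def g_def)
  qed (use P in \<open>auto simp: mat_diag_def\<close>)
  have "Q * P = mat_diag n (\<lambda>c. inverse (g c)) * (transpose_mat P * P)"
    unfolding Q_def using P by (simp add: assoc_mult_mat[of _ n n _ n _ n])
  also have "\<dots> = mat_diag n (\<lambda>_. 1)"
    unfolding gram mat_diag_diag by (intro eq_matI) (auto simp: mat_diag_def g_def nonzero)
  also have "\<dots> = 1\<^sub>m n"
    by (intro eq_matI) (auto simp: mat_diag_def)
  finally have "Q * P = 1\<^sub>m n" .
  moreover from this have "P * Q = 1\<^sub>m n" by (rule mat_mult_left_right_inverse[OF Q P])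
  ultimately show thesis using Q that by blast
qed

lemma char_poly_orthogonal_eigenbasis:
  fixes A :: "'a :: field mat"
  assumes A: "A \<in> carrier_mat n n"
    and carrier: "\<And>c. c < n \<Longrightarrow> v c \<in> carrier_vec n"
    and eigen: "\<And>c. c < n \<Longrightarrow> A *\<^sub>v v c = ev c \<cdot>\<^sub>v v c"
    and orth: "\<And>c d. c < n \<Longrightarrow> d < n \<Longrightarrow> c \<noteq> d \<Longrightarrow> v c \<bullet> v d = 0"
    and nonzero: "\<And>c. c < n \<Longrightarrow> v c \<bullet> v c \<noteq> 0"
  shows "char_poly A = (\<Prod>c\<leftarrow>[0..<n]. [:- ev c, 1:])"
proof -
  define P where "P = mat n n (\<lambda>(i, c). v c $ i)"
  define D where "D = mat_diag n ev"
  have P: "P \<in> carrier_mat n n" and D: "D \<in> carrier_mat n n"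
    unfolding P_def D_def by auto
  have col: "col P c = v c" if "c < n" for c
    using that carrier[OF that] unfolding P_def by (auto intro!: eq_vecI)
  obtain Q where Q: "Q \<in> carrier_mat n n" and QP: "Q * P = 1\<^sub>m n" and PQ: "P * Q = 1\<^sub>m n"
    using orthogonal_columns_invertible[OF P] orth nonzero by (metis col)
  have AP: "A * P = P * D"
  proof (rule eq_matI)
    fix i c assume "i < dim_row (P * D)" "c < dim_col (P * D)"
    then have i: "i < n" and c: "c < n" using P D by auto
    have "(A * P) $$ (i, c) = (A *\<^sub>v v c) $ i"
      using i c A P col[OF c] by simp
    also have "\<dots> = v c $ i * ev c"
      using i carrier[OF c] by (simp add: eigen[OF c])
    also have "\<dots> = (P * D) $$ (i, c)"
      using i c by (simp add: D_def mat_diag_mult_right[OF P]) (simp add: P_def)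
    finally show "(A * P) $$ (i, c) = (P * D) $$ (i, c)" .
  qed (use A P D in auto)
  have "A = A * (P * Q)" using A by (simp add: PQ)
  also have "\<dots> = A * P * Q" using A P Q by simp
  also have "\<dots> = P * D * Q" by (simp add: AP)
  finally have "similar_mat A D"
    using A P D Q PQ QP by (intro similar_matI[of A D P Q n]) auto
  then have "char_poly A = char_poly D" by (rule char_poly_similar)
  also have "\<dots> = (\<Prod>a\<leftarrow>diag_mat D. [:- a, 1:])"
    by (rule char_poly_upper_triangular[OF D]) (simp add: upper_triangular_def D_def mat_diag_def)
  also have "diag_mat D = map ev [0..<n]"
    by (simp add: D_def mat_diag_def diag_mat_def)
  finally show ?thesis by (simp add: comp_def)
qed

section \<open>The secular function\<close>

lemma cos_sin_recurrence:
  fixes y :: "nat \<Rightarrow> real"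
  assumes rec: "\<And>m. y (Suc (Suc m)) = 2 * cos t * y (Suc m) - y m"
    and y0: "y 0 = a * cos u + b * sin u"
    and y1: "y 1 = a * cos (u + t) + b * sin (u + t)"
  shows "y m = a * cos (u + m * t) + b * sin (u + m * t)"
proof -
  define F where "F m = a * cos (u + m * t) + b * sin (u + m * t)" for m :: nat
  have F_rec: "F (Suc (Suc m)) = 2 * cos t * F (Suc m) - F m" for m
  proof -
    let ?x = "u + Suc m * t"
    have "u + Suc (Suc m) * t = ?x + t" and "u + m * t = ?x - t"
      by (simp_all add: algebra_simps)
    moreover have "cos (x + t) = 2 * cos t * cos x - cos (x - t)"
      and "sin (x + t) = 2 * cos t * sin x - sin (x - t)" for x
      by (simp_all add: cos_add cos_diff sin_add sin_diff)
    ultimately show ?thesis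
      unfolding F_def by (simp only:) (simp add: algebra_simps)
  qed
  have "y m = F m \<and> y (Suc m) = F (Suc m)"
  proof (induction m)
    case 0
    then show ?case using y0 y1 by (simp add: F_def)
  next
    case (Suc m)
    then show ?case by (simp add: rec F_rec)
  qed
  then show ?thesis by (simp add: F_def)
qed

lemma recurrence_pos_incr:
  fixes d :: "nat \<Rightarrow> real"
  assumes K: "K \<ge> 2" and rec: "\<And>m. d (Suc (Suc m)) = K * d (Suc m) - d m"
    and pos: "0 < d n" and incr: "d n \<le> d (Suc n)" and "n \<le> m"
  shows "0 < d m \<and> d m \<le> d (Suc m)"
  using \<open>n \<le> m\<close>
proof (induction m rule: dec_induct)
  case base
  then show ?case using pos incr by simp
next
  case (step m)
  have "2 * d (Suc m) \<le> K * d (Suc m)"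
    using K step.IH by (intro mult_right_mono) auto
  then have "d (Suc m) \<le> d (Suc (Suc m))"
    using step.IH rec[of m] by linarith
  then show ?case using step.IH by simp
qed

lemma IVT_sign_change:
  fixes f :: "real \<Rightarrow> real"
  assumes "a \<le> b" and "continuous_on {a..b} f" and "f a * f b \<le> 0"
  shows "\<exists>x\<in>{a..b}. f x = 0"
proof -
  have "f a \<le> 0 \<and> 0 \<le> f b \<or> f b \<le> 0 \<and> 0 \<le> f a"
    using assms(3) by (auto simp: mult_le_0_iff)
  then obtain x where "a \<le> x" "x \<le> b" "f x = 0"
    using IVT'[of f a 0 b] IVT2'[of f b 0 a] assms(1,2) by blast
  then show ?thesis by auto
qed

text \<open>
  For an eigenvalue \<open>r\<close>, the eigenvector that is 1 on the clique vertices other than 0 has the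
  value \<open>path_seq P r m\<close> at vertex \<open>m - 1\<close> (for \<open>m \<ge> 1\<close>), where \<open>P = p\<close>. The initial value
  \<open>path_seq P r 0\<close> is fictitious: it is chosen so that the recurrence for \<open>m = 0\<close> is the eigenvalue
  equation at vertex 0. The recurrence for \<open>m \<ge> 1\<close> is the eigenvalue equation at the inner path
  vertices, and the equation at the end vertex \<open>q - 1\<close> reads \<open>secular P q r = 0\<close>.
\<close>

fun path_seq :: "real \<Rightarrow> real \<Rightarrow> nat \<Rightarrow> real" where
  "path_seq P r 0 = 1 + (P - 2) * r"
| "path_seq P r (Suc 0) = 1 - r"
| "path_seq P r (Suc (Suc m)) = (2 - r) * path_seq P r (Suc m) - path_seq P r m"

definition secular :: "real \<Rightarrow> nat \<Rightarrow> real \<Rightarrow> real" where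
  "secular P q r = path_seq P r (Suc q) - path_seq P r q"

lemma secular_Suc:
  "secular P (Suc k) r = path_seq P r (Suc k) - path_seq P r k - r * path_seq P r (Suc k)"
  by (simp add: secular_def algebra_simps)

lemma path_seq_at_0: "path_seq P 0 m = 1"
  by (induction P "0::real" m rule: path_seq.induct) auto

lemma secular_at_0: "secular P q 0 = 0"
  by (simp add: secular_def path_seq_at_0)

lemma continuous_on_path_seq: "continuous_on S (\<lambda>r. path_seq P r m)"
  by (induction P "r::real" m rule: path_seq.induct) (auto intro!: continuous_intros)

lemma continuous_on_secular: "continuous_on S (secular P q)"
  unfolding secular_def by (intro continuous_intros continuous_on_path_seq)

lemma path_seq_cos:
  "cos s * path_seq P (2 - 2 * cos (2 * s)) m
     = (1 + (P - 3) * (1 - cos (2 * s))) * cos ((2 * real m - 1) * s)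
       - (P - 1) * sin (2 * s) * sin ((2 * real m - 1) * s)"
proof -
  have "cos s * path_seq P (2 - 2 * cos (2 * s)) m
     = (1 + (P - 3) * (1 - cos (2 * s))) * cos (- s + m * (2 * s))
       + (- (P - 1) * sin (2 * s)) * sin (- s + m * (2 * s))"
  proof (rule cos_sin_recurrence)
    fix m
    show "cos s * path_seq P (2 - 2 * cos (2 * s)) (Suc (Suc m))
      = 2 * cos (2 * s) * (cos s * path_seq P (2 - 2 * cos (2 * s)) (Suc m))
        - cos s * path_seq P (2 - 2 * cos (2 * s)) m"
      by (simp add: algebra_simps)
  next
    show "cos s * path_seq P (2 - 2 * cos (2 * s)) 0
      = (1 + (P - 3) * (1 - cos (2 * s))) * cos (- s) + (- (P - 1) * sin (2 * s)) * sin (- s)"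
      unfolding cos_double_sin sin_double by (simp add: algebra_simps power2_eq_square)
  next
    have "- s + 2 * s = s" by simp
    then show "cos s * path_seq P (2 - 2 * cos (2 * s)) 1
      = (1 + (P - 3) * (1 - cos (2 * s))) * cos (- s + 2 * s)
        + (- (P - 1) * sin (2 * s)) * sin (- s + 2 * s)"
      unfolding cos_double_sin sin_double by (simp add: algebra_simps power2_eq_square)
  qed
  also have "- s + m * (2 * s) = (2 * real m - 1) * s"
    by (simp add: algebra_simps)
  finally show ?thesis by (simp add: algebra_simps)
qed

lemma secular_cos:
  "cos s * secular P q (2 - 2 * cos (2 * s))
     = - 2 * sin s * ((P - 1) * sin (2 * s) * cos (2 * q * s)
                      + (1 + (P - 3) * (1 - cos (2 * s))) * sin (2 * q * s))"
proof -
  let ?x = "2 * q * s"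
  have "(2 * real (Suc q) - 1) * s = ?x + s" and "(2 * real q - 1) * s = ?x - s"
    by (simp_all add: algebra_simps)
  then show ?thesis
    unfolding secular_def right_diff_distrib path_seq_cos
    by (simp add: cos_add cos_diff sin_add sin_diff algebra_simps)
qed

text \<open>At these angles one of \<open>cos (2 q s)\<close> and \<open>sin (2 q s)\<close> vanishes, so \<open>secular_cos\<close> fixes
  the sign of the secular function.\<close>

definition node_angle :: "nat \<Rightarrow> nat \<Rightarrow> real" where
  "node_angle q k = (if k = 0 then pi / (4 * q) else k * pi / (2 * q))"

lemma strict_mono_node_angle:
  assumes "q > 0"
  shows "strict_mono (node_angle q)"
proof (rule strict_mono_Suc_iff[THEN iffD2], intro allI)
  fix k
  show "node_angle q k < node_angle q (Suc k)"
    using assms by (auto simp: node_angle_def field_simps)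
qed

lemma node_angle_bounds:
  assumes "k < q"
  shows "0 < node_angle q k" and "node_angle q k < pi / 2"
proof -
  have "real k * pi < real q * pi" using assms by simp
  then show "node_angle q k < pi / 2" using assms by (auto simp: node_angle_def field_simps)
  show "0 < node_angle q k" using assms by (simp add: node_angle_def)
qed

lemma secular_node_sign:
  assumes P: "P \<ge> 3" and k: "k < q"
  shows "(-1) ^ k * secular P q (2 - 2 * cos (2 * node_angle q k)) < 0"
proof -
  let ?s = "node_angle q k"
  let ?A = "1 + (P - 3) * (1 - cos (2 * ?s))"
  have s: "0 < ?s" "?s < pi / 2" using node_angle_bounds[OF k] .
  have cos_pos: "cos ?s > 0" using s by (intro cos_gt_zero) auto
  have sin_pos: "sin ?s > 0" and sin2_pos: "sin (2 * ?s) > 0"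
    using s by (auto intro!: sin_gt_zero)
  have A_pos: "?A > 0"
    using P by (simp add: add_pos_nonneg)
  have "cos ?s * ((-1) ^ k * secular P q (2 - 2 * cos (2 * ?s))) < 0"
  proof (cases "k = 0")
    case True
    then have half: "2 * real q * ?s = pi / 2" using k by (simp add: node_angle_def)
    have "cos (2 * real q * ?s) = 0" and "sin (2 * real q * ?s) = 1" unfolding half by simp_all
    then have "cos ?s * ((-1) ^ k * secular P q (2 - 2 * cos (2 * ?s))) = - 2 * sin ?s * ?A"
      using True secular_cos[of ?s P q] by simp
    then show ?thesis using sin_pos A_pos by (simp add: mult_pos_pos)
  next
    case False
    then have cq: "cos (2 * real q * ?s) = (-1) ^ k" and sq: "sin (2 * real q * ?s) = 0"
      using k by (simp_all add: node_angle_def cos_npi sin_npi)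
    have "cos ?s * ((-1) ^ k * secular P q (2 - 2 * cos (2 * ?s)))
        = (-1) ^ k * (cos ?s * secular P q (2 - 2 * cos (2 * ?s)))"
      by (simp only: mult.left_commute)
    also have "\<dots> = ((-1) ^ k * (-1) ^ k) * (- 2 * sin ?s * ((P - 1) * sin (2 * ?s)))"
      unfolding secular_cos cq sq by (simp add: algebra_simps)
    also have "\<dots> < 0"
      using sin_pos sin2_pos P by (simp add: power_mult_distrib[symmetric] mult_pos_pos)
    finally show ?thesis .
  qed
  then show ?thesis using cos_pos by (simp add: mult_less_0_iff)
qed

lemma secular_root_between_nodes:
  assumes P: "P \<ge> 3" and k: "Suc k < q"
  shows "\<exists>s. node_angle q k < s \<and> s < node_angle q (Suc k)
           \<and> secular P q (2 - 2 * cos (2 * s)) = 0"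
proof -
  define G where "G s = secular P q (2 - 2 * cos (2 * s))" for s
  let ?a = "node_angle q k" and ?b = "node_angle q (Suc k)"
  have "(-1) ^ k * G ?a < 0" and "(-1) ^ Suc k * G ?b < 0"
    unfolding G_def by (rule secular_node_sign[OF P], use k in simp)+
  then have "((-1) ^ k * G ?a) * ((-1) ^ Suc k * G ?b) > 0"
    by (rule mult_neg_neg)
  then have sign_change: "G ?a * G ?b < 0"
    by (simp add: algebra_simps power_mult_distrib[symmetric])
  moreover have "?a \<le> ?b"
    using strict_mono_node_angle[of q] k by (simp add: strict_mono_less_eq)
  moreover have "continuous_on {?a..?b} G"
    unfolding G_def by (intro continuous_on_compose2[OF continuous_on_secular] continuous_intros) auto
  ultimately obtain s where "s \<in> {?a..?b}" "G s = 0"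
    using IVT_sign_change[of ?a ?b G] by fastforce
  moreover have "s \<noteq> ?a" "s \<noteq> ?b" using sign_change \<open>G s = 0\<close> by auto
  ultimately show ?thesis unfolding G_def by force
qed

lemma secular_small_roots:
  assumes P: "P \<ge> 3" and q: "q \<ge> 1"
  shows "\<exists>rs. length rs = q \<and> distinct rs \<and> 0 \<in> set rs \<and> set rs \<subseteq> {0..<4}
           \<and> (\<forall>r\<in>set rs. secular P q r = 0)"
proof -
  have "\<forall>k. \<exists>s. Suc k < q \<longrightarrow> node_angle q k < s \<and> s < node_angle q (Suc k)
      \<and> secular P q (2 - 2 * cos (2 * s)) = 0"
    using secular_root_between_nodes[OF P] by blast
  then obtain \<sigma> where \<sigma>: "\<And>k. Suc k < q \<Longrightarrow> node_angle q k < \<sigma> k \<and> \<sigma> k < node_angle q (Suc k)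
      \<and> secular P q (2 - 2 * cos (2 * \<sigma> k)) = 0"
    by metis
  have \<sigma>_range: "0 < 2 * \<sigma> k" "2 * \<sigma> k < pi" if "Suc k < q" for k
    using \<sigma>[OF that] node_angle_bounds[of k q] node_angle_bounds[of "Suc k" q] that by auto
  have \<sigma>_mono: "\<sigma> k < \<sigma> l" if "k < l" "Suc l < q" for k l
  proof -
    have "\<sigma> k < node_angle q (Suc k)" using \<sigma> that by auto
    also have "\<dots> \<le> node_angle q l"
      using strict_mono_node_angle[of q] that by (simp add: strict_mono_less_eq)
    also have "\<dots> < \<sigma> l" using \<sigma> that by auto
    finally show ?thesis .
  qed
  define rs where "rs = 0 # map (\<lambda>k. 2 - 2 * cos (2 * \<sigma> k)) [0..<q - 1]"
  have "inj_on (\<lambda>k. 2 - 2 * cos (2 * \<sigma> k)) {0..<q - 1}"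
  proof (rule inj_onI)
    fix k l
    assume "k \<in> {0..<q - 1}" "l \<in> {0..<q - 1}" "2 - 2 * cos (2 * \<sigma> k) = 2 - 2 * cos (2 * \<sigma> l)"
    then have k: "Suc k < q" and l: "Suc l < q" and "cos (2 * \<sigma> k) = cos (2 * \<sigma> l)"
      by auto
    then have "\<sigma> k = \<sigma> l"
      using cos_inj_pi[of "2 * \<sigma> k" "2 * \<sigma> l"] \<sigma>_range[OF k] \<sigma>_range[OF l] by simp
    then show "k = l" using \<sigma>_mono k l by (metis less_irrefl linorder_neqE_nat)
  qed
  moreover have "2 - 2 * cos (2 * \<sigma> k) \<in> {0<..<4}" if "k < q - 1" for k
  proof -
    have "Suc k < q" using that by simp
    then show ?thesis
      using cos_monotone_0_pi[of "2 * \<sigma> k" pi] cos_monotone_0_pi[of 0 "2 * \<sigma> k"] \<sigma>_range[of k]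
      by auto
  qed
  moreover have "secular P q (2 - 2 * cos (2 * \<sigma> k)) = 0" if "k < q - 1" for k
    using \<sigma>[of k] that by auto
  ultimately have "length rs = q \<and> distinct rs \<and> 0 \<in> set rs \<and> set rs \<subseteq> {0..<4}
      \<and> (\<forall>r\<in>set rs. secular P q r = 0)"
    using q by (fastforce simp: rs_def distinct_map secular_at_0)
  then show ?thesis by blast
qed

lemma secular_alternating:
  "(-1) ^ q * secular P q r
     = - ((-1) ^ Suc q * path_seq P r (Suc q) + (-1) ^ q * path_seq P r q)"
  by (simp add: secular_def algebra_simps)

lemma path_seq_alternating:
  "(-1) ^ Suc (Suc m) * path_seq P r (Suc (Suc m))
     = (r - 2) * ((-1) ^ Suc m * path_seq P r (Suc m)) - (-1) ^ m * path_seq P r m"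
  by (simp add: algebra_simps)

lemma secular_sign_at_P_plus_1:
  assumes P: "P \<ge> 3" and q: "q \<ge> 2"
  shows "(-1) ^ q * secular P q (P + 1) \<ge> 0"
proof -
  define d where "d m = - ((-1) ^ m * path_seq P (P + 1) m)" for m
  have rec: "d (Suc (Suc m)) = (P - 1) * d (Suc m) - d m" for m
    unfolding d_def using path_seq_alternating[of m P "P + 1"] by (simp add: algebra_simps)
  have d2: "d 2 = -1" and d3: "d 3 = 1" and d4: "d 4 = P"
    by (simp_all add: d_def numeral_eq_Suc algebra_simps)
  have "(-1) ^ q * secular P q (P + 1) = d (Suc q) + d q"
    unfolding secular_alternating d_def by simp
  also have "\<dots> \<ge> 0"
  proof (cases "q = 2")
    case True
    then show ?thesis using d2 d3 by (simp add: numeral_eq_Suc)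
  next
    case False
    then have "0 < d q \<and> d q \<le> d (Suc q)"
      using P q rec d3 d4 by (intro recurrence_pos_incr[of "P - 1" d 3]) (auto simp: numeral_eq_Suc)
    then show ?thesis by simp
  qed
  finally show ?thesis .
qed

lemma secular_sign_at_P_plus_2:
  assumes P: "P \<ge> 3" and q: "q \<ge> 1"
  shows "(-1) ^ q * secular P q (P + 2) < 0"
proof -
  define d where "d m = (-1) ^ m * path_seq P (P + 2) m" for m
  have rec: "d (Suc (Suc m)) = P * d (Suc m) - d m" for m
    unfolding d_def using path_seq_alternating[of m P "P + 2"] by (simp add: algebra_simps)
  have d1: "d 1 = P + 1" and d2: "d 2 = P + 3"
    by (simp_all add: d_def numeral_eq_Suc algebra_simps power2_eq_square)
  have "0 < d q \<and> d q \<le> d (Suc q)"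
    using P q rec d1 d2 by (intro recurrence_pos_incr[of P d 1]) (auto simp: numeral_eq_Suc)
  moreover have "(-1) ^ q * secular P q (P + 2) = - (d (Suc q) + d q)"
    unfolding secular_alternating d_def by simp
  ultimately show ?thesis by simp
qed

lemma secular_large_root:
  assumes P: "P \<ge> 3" and q: "q \<ge> 2"
  shows "\<exists>lam\<in>{P + 1..P + 2}. secular P q lam = 0"
proof (rule IVT_sign_change)
  have "0 \<le> (-1) ^ q * secular P q (P + 1)" and "(-1) ^ q * secular P q (P + 2) \<le> 0"
    using secular_sign_at_P_plus_1[OF P q] secular_sign_at_P_plus_2[OF P, of q] q by auto
  from mult_nonneg_nonpos[OF this]
  show "secular P q (P + 1) * secular P q (P + 2) \<le> 0"
    by (simp add: algebra_simps power_mult_distrib[symmetric])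
qed (auto intro: continuous_on_secular)

section \<open>The Laplacian of \<open>K\<^sub>p \<oplus> C\<^sub>q\<close>\<close>

definition KC_index_adj :: "nat \<Rightarrow> nat \<Rightarrow> nat \<Rightarrow> bool" where
  "KC_index_adj p i j \<longleftrightarrow> i \<noteq> j \<and>
     (i < p \<and> j < p \<or> p - 1 \<le> i \<and> p - 1 \<le> j \<and> (i = Suc j \<or> j = Suc i))"

definition clique_vector :: "nat \<Rightarrow> nat \<Rightarrow> real" where
  "clique_vector k i = (if i < k then 1 else if i = k then - real k else 0)"

lemma sum_clique_vector: "k < m \<Longrightarrow> (\<Sum>i<m. clique_vector k i) = 0"
proof (induction m)
  case (Suc m)
  then show ?case by (cases "k = m") (auto simp: clique_vector_def)
qed simp

lemma clique_vector_orthogonal: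
  assumes "k < m" and "\<And>i. i \<le> k \<Longrightarrow> g i = 1"
  shows "vec m (clique_vector k) \<bullet> vec m g = 0"
proof -
  have "vec m (clique_vector k) \<bullet> vec m g = (\<Sum>i<m. clique_vector k i)"
    unfolding scalar_prod_def using assms(2)
    by (auto intro!: sum.cong simp: clique_vector_def lessThan_atLeast0)
  also have "\<dots> = 0" using assms(1) by (rule sum_clique_vector)
  finally show ?thesis .
qed

locale KC_graph =
  fixes p q :: nat
  assumes p: "3 \<le> p" and q: "2 \<le> q"
begin

abbreviation n :: nat where "n \<equiv> p + q - 1"

abbreviation L :: "real mat" where "L \<equiv> KC_laplacian p q"

abbreviation vertex :: "nat \<Rightarrow> int" where "vertex i \<equiv> int i - int p + 1"

definition neighbours :: "nat \<Rightarrow> nat set" where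
  "neighbours i = {j. j < n \<and> KC_index_adj p i j}"

lemma index_cases:
  assumes "i < n"
  obtains "i < p - 1" | "i = p - 1" | "p \<le> i" "i < p + q - 2" | "i = p + q - 2"
  using assms by linarith

lemma KC_adj_vertex_iff:
  assumes i: "i < n" and j: "j < n"
  shows "KC_adj p q (vertex i) (vertex j) \<longleftrightarrow> KC_index_adj p i j"
proof
  assume "KC_adj p q (vertex i) (vertex j)"
  then show "KC_index_adj p i j"
    unfolding KC_adj_def KC_index_adj_def KC_vertices_def by (auto simp: doubleton_eq_iff)
next
  assume adj: "KC_index_adj p i j"
  have V: "vertex i \<in> KC_vertices p q" "vertex j \<in> KC_vertices p q"
    using i j p by (auto simp: KC_vertices_def)
  show "KC_adj p q (vertex i) (vertex j)"
  proof (cases "i < p \<and> j < p")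
    case True
    then show ?thesis using V adj unfolding KC_adj_def KC_index_adj_def by auto
  next
    case False
    let ?m = "vertex (min i j)"
    have path: "p - 1 \<le> min i j" "i = Suc j \<or> j = Suc i" "i \<noteq> j"
      using adj False unfolding KC_index_adj_def by auto
    then have pair: "{vertex i, vertex j} = {?m, ?m + 1}"
      by (auto simp: doubleton_eq_iff)
    have m: "?m = 0 \<or> 1 \<le> ?m \<and> ?m \<le> int q - 2"
      using path i j p by auto
    have "{vertex i, vertex j} = {0, 1} \<or>
        (\<exists>k. 1 \<le> k \<and> k \<le> int q - 2 \<and> {vertex i, vertex j} = {k, k + 1})"
    proof (cases "?m = 0")
      case True
      then show ?thesis unfolding pair by simp
    next
      case False
      then show ?thesis unfolding pair using m by blast
    qed
    moreover have "vertex i \<noteq> vertex j" using path by simp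
    ultimately show ?thesis
      using V unfolding KC_adj_def by blast
  qed
qed

lemma KC_degree_vertex:
  assumes i: "i < n"
  shows "KC_degree p q (vertex i) = card (neighbours i)"
proof -
  have "{v \<in> KC_vertices p q. KC_adj p q (vertex i) v} = vertex ` neighbours i"
  proof (intro equalityI subsetI)
    fix v assume v: "v \<in> {v \<in> KC_vertices p q. KC_adj p q (vertex i) v}"
    define j where "j = nat (v + int p - 1)"
    have "v = vertex j" and j: "j < n"
      using v p q unfolding j_def KC_vertices_def by auto
    then show "v \<in> vertex ` neighbours i"
      using v KC_adj_vertex_iff[OF i j] unfolding neighbours_def by auto
  next
    fix v assume "v \<in> vertex ` neighbours i"
    then obtain j where "v = vertex j" "j < n" "KC_index_adj p i j"
      unfolding neighbours_def by blast
    then show "v \<in> {v \<in> KC_vertices p q. KC_adj p q (vertex i) v}"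
      using KC_adj_vertex_iff[OF i] p q unfolding KC_vertices_def by auto
  qed
  moreover have "inj_on vertex (neighbours i)" by (auto simp: inj_on_def)
  ultimately show ?thesis unfolding KC_degree_def by (simp add: card_image)
qed

lemma KC_laplacian_index:
  assumes "i < n" and "j < n"
  shows "L $$ (i, j) =
    (if i = j then real (card (neighbours i)) else if j \<in> neighbours i then -1 else 0)"
  using assms KC_degree_vertex KC_adj_vertex_iff
  by (simp add: KC_laplacian_def neighbours_def Let_def)

lemma KC_laplacian_carrier: "L \<in> carrier_mat n n"
  by (simp add: KC_laplacian_def)

lemma KC_laplacian_symmetric: "transpose_mat L = L"
proof (rule eq_matI)
  fix i j assume "i < dim_row L" "j < dim_col L"
  then have "i < n" "j < n" using KC_laplacian_carrier by auto
  moreover have "KC_index_adj p i j \<longleftrightarrow> KC_index_adj p j i"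
    unfolding KC_index_adj_def by auto
  ultimately show "transpose_mat L $$ (i, j) = L $$ (i, j)"
    using KC_laplacian_carrier by (auto simp: KC_laplacian_index neighbours_def)
qed (use KC_laplacian_carrier in auto)

lemma KC_laplacian_mult_vec_neighbours:
  fixes f :: "nat \<Rightarrow> real"
  assumes i: "i < n"
  shows "(L *\<^sub>v vec n f) $ i = card (neighbours i) * f i - (\<Sum>j\<in>neighbours i. f j)"
proof -
  have "i \<notin> neighbours i" by (simp add: neighbours_def KC_index_adj_def)
  have "(L *\<^sub>v vec n f) $ i = (\<Sum>j<n. L $$ (i, j) * f j)"
    using i KC_laplacian_carrier by (simp add: scalar_prod_def lessThan_atLeast0)
  also have "\<dots> = (\<Sum>j<n. (if j = i then card (neighbours i) * f j else 0)
                           - (if j \<in> neighbours i then f j else 0))"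
  proof (intro sum.cong refl)
    fix j assume "j \<in> {..<n}"
    then show "L $$ (i, j) * f j = (if j = i then card (neighbours i) * f j else 0)
                                 - (if j \<in> neighbours i then f j else 0)"
      using KC_laplacian_index[OF i, of j] \<open>i \<notin> neighbours i\<close> by auto
  qed
  also have "\<dots> = card (neighbours i) * f i - (\<Sum>j\<in>neighbours i. f j)"
    using i
    by (simp add: sum_subtractf sum.If_cases neighbours_def lessThan_def Collect_conj_eq Int_commute)
  finally show ?thesis .
qed

lemma KC_laplacian_mult_vec:
  fixes f :: "nat \<Rightarrow> real"
  assumes i: "i < n"
  shows "(L *\<^sub>v vec n f) $ i =
    (if i < p - 1 then p * f i - (\<Sum>j<p. f j)
     else if i = p - 1 then p * f i - (\<Sum>j<p - 1. f j) - f p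
     else if i < p + q - 2 then 2 * f i - f (i - 1) - f (Suc i)
     else f i - f (i - 1))"
proof (cases rule: index_cases[OF i])
  case 1
  then have "neighbours i = {..<p} - {i}" using p q by (auto simp: neighbours_def KC_index_adj_def)
  then show ?thesis
    unfolding KC_laplacian_mult_vec_neighbours[OF i] using 1 p
    by (simp add: sum_diff1 of_nat_diff algebra_simps)
next
  case 2
  then have "neighbours i = insert p {..<p - 1}"
    using p q by (auto simp: neighbours_def KC_index_adj_def)
  then show ?thesis
    unfolding KC_laplacian_mult_vec_neighbours[OF i] using 2 p by (simp add: of_nat_diff algebra_simps)
next
  case 3
  then obtain h where h: "i = Suc h" using p by (cases i) auto
  have "neighbours i = {h, Suc i}"
    using 3 p q unfolding h by (auto simp: neighbours_def KC_index_adj_def)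
  then have "card (neighbours i) = 2" "(\<Sum>j\<in>neighbours i. f j) = f (i - 1) + f (Suc i)"
    using h by simp_all
  moreover have "\<not> i < p - 1" "i \<noteq> p - 1" using 3 p by auto
  ultimately show ?thesis unfolding KC_laplacian_mult_vec_neighbours[OF i] using 3 p by auto
next
  case 4
  then have "neighbours i = {i - 1}" using p q by (auto simp: neighbours_def KC_index_adj_def)
  moreover have "\<not> i < p - 1" "i \<noteq> p - 1" "\<not> i < p + q - 2" using 4 p q by auto
  ultimately show ?thesis unfolding KC_laplacian_mult_vec_neighbours[OF i] using 4 by simp
qed

lemma clique_vector_eigen:
  assumes k: "k < p - 1"
  shows "L *\<^sub>v vec n (clique_vector k) = real p \<cdot>\<^sub>v vec n (clique_vector k)"
proof (rule eq_vecI)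
  fix i assume "i < dim_vec (real p \<cdot>\<^sub>v vec n (clique_vector k))"
  then have i: "i < n" by simp
  have sums: "(\<Sum>j<p. clique_vector k j) = 0" "(\<Sum>j<p - 1. clique_vector k j) = 0"
    using k by (simp_all add: sum_clique_vector)
  have "(L *\<^sub>v vec n (clique_vector k)) $ i = p * clique_vector k i"
  proof (cases rule: index_cases[OF i])
    case 1
    then show ?thesis unfolding KC_laplacian_mult_vec[OF i] using sums by simp
  next
    case 2
    moreover have "k < p" using k by simp
    ultimately show ?thesis
      unfolding KC_laplacian_mult_vec[OF i] using sums k by (simp add: clique_vector_def)
  next
    case 3
    moreover have "k < i - 1" "k < p" "i \<noteq> p - 1" using 3 k by auto
    ultimately show ?thesis unfolding KC_laplacian_mult_vec[OF i] by (simp add: clique_vector_def)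
  next
    case 4
    moreover have "k < i - 1" "k < i" "\<not> i < p - 1" "i \<noteq> p - 1" "\<not> i < p + q - 2"
      using 4 k q by auto
    ultimately show ?thesis unfolding KC_laplacian_mult_vec[OF i] by (simp add: clique_vector_def)
  qed
  then show "(L *\<^sub>v vec n (clique_vector k)) $ i = (real p \<cdot>\<^sub>v vec n (clique_vector k)) $ i"
    using i by simp
qed (use KC_laplacian_carrier in auto)

definition path_vector :: "real \<Rightarrow> nat \<Rightarrow> real" where
  "path_vector r i = (if i < p - 1 then 1 else path_seq p r (i + 2 - p))"

lemma path_vector_at_path: "path_vector r (p - 1 + m) = path_seq p r (Suc m)"
  using p by (simp add: path_vector_def)

lemma path_vector_eigen_clique:
  assumes i: "i \<le> p - 1"
  shows "(L *\<^sub>v vec n (path_vector r)) $ i = r * path_vector r i"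
proof -
  have i': "i < n" using i q by simp
  have clique: "(\<Sum>j<p - 1. path_vector r j) = p - 1"
    by (simp add: path_vector_def)
  have x1: "path_vector r (p - 1) = 1 - r"
    using path_vector_at_path[of r 0] by simp
  show ?thesis
  proof (cases "i = p - 1")
    case True
    have x2: "path_vector r p = (2 - r) * (1 - r) - (1 + (p - 2) * r)"
      using path_vector_at_path[of r 1] p by (simp add: numeral_2_eq_2)
    have "(L *\<^sub>v vec n (path_vector r)) $ i
        = p * path_vector r (p - 1) - (\<Sum>j<p - 1. path_vector r j) - path_vector r p"
      unfolding KC_laplacian_mult_vec[OF i'] using True by simp
    also have "\<dots> = r * (1 - r)"
      unfolding x1 x2 clique using p by (simp add: of_nat_diff algebra_simps)
    finally show ?thesis using True x1 by simp
  next
    case False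
    have "(\<Sum>j<p. path_vector r j) = (\<Sum>j<p - 1. path_vector r j) + path_vector r (p - 1)"
      using p by (metis Suc_diff_1 less_le_trans sum.lessThan_Suc zero_less_numeral)
    then have "(\<Sum>j<p. path_vector r j) = p - r"
      using clique x1 p by (simp add: of_nat_diff)
    then show ?thesis
      unfolding KC_laplacian_mult_vec[OF i'] using i False by (simp add: path_vector_def)
  qed
qed

lemma path_vector_eigen_path:
  assumes r: "secular p q r = 0" and i: "p \<le> i" "i < n"
  shows "(L *\<^sub>v vec n (path_vector r)) $ i = r * path_vector r i"
proof -
  define m where "m = i - p"
  have idx: "i - 1 = p - 1 + m" "i = p - 1 + Suc m" "Suc i = p - 1 + Suc (Suc m)"
    using i p by (auto simp: m_def)
  have x0: "path_vector r (i - 1) = path_seq p r (Suc m)"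
    unfolding idx(1) path_vector_at_path ..
  have x1: "path_vector r i = path_seq p r (Suc (Suc m))"
    unfolding idx(2) path_vector_at_path ..
  have "\<not> i < p - 1" "i \<noteq> p - 1" using i p by auto
  show ?thesis
  proof (cases "i < p + q - 2")
    case True
    have "path_vector r (Suc i) = path_seq p r (Suc (Suc (Suc m)))"
      unfolding idx(3) path_vector_at_path ..
    then have "(L *\<^sub>v vec n (path_vector r)) $ i
        = 2 * path_seq p r (Suc (Suc m)) - path_seq p r (Suc m) - path_seq p r (Suc (Suc (Suc m)))"
      unfolding KC_laplacian_mult_vec[OF i(2)] using True x0 x1 \<open>\<not> i < p - 1\<close> \<open>i \<noteq> p - 1\<close> by auto
    then show ?thesis unfolding x1 by (simp add: algebra_simps)
  next
    case False
    then have "q = Suc (Suc m)" using i p q by (simp add: m_def)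
    moreover have "(L *\<^sub>v vec n (path_vector r)) $ i
        = path_seq p r (Suc (Suc m)) - path_seq p r (Suc m)"
      unfolding KC_laplacian_mult_vec[OF i(2)] using False x0 x1 \<open>\<not> i < p - 1\<close> \<open>i \<noteq> p - 1\<close> by simp
    ultimately show ?thesis
      using r secular_Suc[of p "Suc m" r] unfolding x1 by simp
  qed
qed

lemma path_vector_eigen:
  assumes "secular p q r = 0"
  shows "L *\<^sub>v vec n (path_vector r) = r \<cdot>\<^sub>v vec n (path_vector r)"
proof (rule eq_vecI)
  fix i assume "i < dim_vec (r \<cdot>\<^sub>v vec n (path_vector r))"
  then have "i < n" by simp
  then show "(L *\<^sub>v vec n (path_vector r)) $ i = (r \<cdot>\<^sub>v vec n (path_vector r)) $ i"
    using path_vector_eigen_clique[of i r] path_vector_eigen_path[OF assms, of i]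
    by (cases "i < p") auto
qed (use KC_laplacian_carrier in auto)

context
  fixes rs :: "real list"
  assumes len: "length rs = q + 1" and dist: "distinct rs"
    and roots: "\<And>r. r \<in> set rs \<Longrightarrow> secular p q r = 0"
begin

definition eigenbasis :: "nat \<Rightarrow> real vec" where
  "eigenbasis c =
     vec n (if c < p - 2 then clique_vector (Suc c) else path_vector (rs ! (c - (p - 2))))"

definition basis_eigenvalue :: "nat \<Rightarrow> real" where
  "basis_eigenvalue c = (if c < p - 2 then real p else rs ! (c - (p - 2)))"

lemma eigenbasis_carrier: "eigenbasis c \<in> carrier_vec n"
  by (simp add: eigenbasis_def)

lemma eigenbasis_eigen:
  assumes "c < n"
  shows "L *\<^sub>v eigenbasis c = basis_eigenvalue c \<cdot>\<^sub>v eigenbasis c"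
proof -
  have "secular p q (rs ! (c - (p - 2))) = 0"
    using assms len p by (intro roots nth_mem) auto
  then show ?thesis
    using clique_vector_eigen[of "Suc c"] path_vector_eigen
    by (simp add: eigenbasis_def basis_eigenvalue_def)
qed

lemma eigenbasis_orthogonal_less:
  assumes cd: "c < d" "d < n"
  shows "eigenbasis c \<bullet> eigenbasis d = 0"
proof (cases "d < p - 2")
  case True
  then show ?thesis
    using cd by (auto simp: eigenbasis_def clique_vector_def intro!: clique_vector_orthogonal)
next
  case d: False
  show ?thesis
  proof (cases "c < p - 2")
    case True
    then show ?thesis
      using d cd by (auto simp: eigenbasis_def path_vector_def intro!: clique_vector_orthogonal)
  next
    case False
    then have "basis_eigenvalue c \<noteq> basis_eigenvalue d"
      using d cd dist len by (simp add: basis_eigenvalue_def nth_eq_iff_index_eq)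
    then show ?thesis
      using cd by (intro symmetric_eigenvectors_orthogonal[OF KC_laplacian_carrier
          KC_laplacian_symmetric eigenbasis_carrier eigenbasis_carrier
          eigenbasis_eigen eigenbasis_eigen]) auto
  qed
qed

lemma eigenbasis_orthogonal:
  assumes "c < n" and "d < n" and "c \<noteq> d"
  shows "eigenbasis c \<bullet> eigenbasis d = 0"
  using assms eigenbasis_orthogonal_less[of c d] eigenbasis_orthogonal_less[of d c]
    comm_scalar_prod[OF eigenbasis_carrier eigenbasis_carrier, of c d]
  by (cases "c < d") auto

lemma eigenbasis_nonzero:
  assumes "c < n"
  shows "eigenbasis c \<bullet> eigenbasis c \<noteq> 0"
proof -
  have "eigenbasis c \<bullet> eigenbasis c > 0"
  proof (cases "c < p - 2")
    case True
    then show ?thesis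
      by (intro scalar_prod_self_pos[of "Suc c"]) (auto simp: eigenbasis_def clique_vector_def)
  next
    case False
    then show ?thesis
      using assms p by (intro scalar_prod_self_pos[of 0]) (auto simp: eigenbasis_def path_vector_def)
  qed
  then show ?thesis by simp
qed

lemma map_basis_eigenvalue: "map basis_eigenvalue [0..<n] = replicate (p - 2) (real p) @ rs"
proof (rule nth_equalityI)
  show "length (map basis_eigenvalue [0..<n]) = length (replicate (p - 2) (real p) @ rs)"
    using len p by simp
  fix c assume "c < length (map basis_eigenvalue [0..<n])"
  then have "c < n" by simp
  then show "map basis_eigenvalue [0..<n] ! c = (replicate (p - 2) (real p) @ rs) ! c"
    by (cases "c < p - 2") (simp_all add: basis_eigenvalue_def nth_append)
qed

lemma spectrum_KC_laplacian: "spectrum_mset L (replicate_mset (p - 2) (real p) + mset rs)"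
proof -
  have "char_poly L = (\<Prod>c\<leftarrow>[0..<n]. [:- basis_eigenvalue c, 1:])"
    by (rule char_poly_orthogonal_eigenbasis[OF KC_laplacian_carrier eigenbasis_carrier
          eigenbasis_eigen eigenbasis_orthogonal eigenbasis_nonzero])
  also have "\<dots> = (\<Prod>a\<leftarrow>replicate (p - 2) (real p) @ rs. [:- a, 1:])"
    by (simp add: comp_def flip: map_basis_eigenvalue)
  finally show ?thesis
    unfolding spectrum_mset_def by (simp add: prod_mset_prod_list flip: mset_map)
qed

end

end

theorem proposition8:
  fixes p q :: nat
  assumes "p \<ge> 3" and "q \<ge> 2"
  shows "\<exists>E lam M.
     spectrum_mset (KC_laplacian p q) E \<and>
     E = replicate_mset (p - 2) (real p) + {#lam#} + M \<and>
     real p < lam \<and> lam \<le> real p + 2 \<and> count E lam = 1 \<and>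
     size M = q \<and> set_mset M \<subseteq> {0..4} \<and> 0 \<in># M \<and> count E 0 = 1"
proof -
  interpret KC_graph p q using assms by unfold_locales
  obtain rs where rs: "length rs = q" "distinct rs" "0 \<in> set rs" "set rs \<subseteq> {0..<4}"
    and rs_roots: "\<forall>r\<in>set rs. secular p q r = 0"
    using secular_small_roots[of p q] assms by auto
  obtain lam where lam: "real p + 1 \<le> lam" "lam \<le> real p + 2" and lam_root: "secular p q lam = 0"
    using secular_large_root[of p q] assms by auto
  have "lam \<notin> set rs" using lam rs(4) assms by fastforce
  have "spectrum_mset L (replicate_mset (p - 2) (real p) + mset (lam # rs))"
    using rs rs_roots lam_root \<open>lam \<notin> set rs\<close> by (intro spectrum_KC_laplacian) auto
  moreover have "count (mset rs) a = (if a \<in> set rs then 1 else 0)" for a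
    using rs(2) by (simp add: distinct_count_atmost_1)
  ultimately show ?thesis
    using lam rs \<open>lam \<notin> set rs\<close> assms
    by (intro exI[of _ "replicate_mset (p - 2) (real p) + {#lam#} + mset rs"] exI[of _ lam]
        exI[of _ "mset rs"]) (auto simp: add.assoc)
qed

end
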